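(* In the on-policy TD$(n)$ setting of the context, suppose $\epsilon_k\equiv\epsilon\le\frac{1-\beta^n}{16(1+\beta^{2n})}$. Then for all $k\ge0$, $$\mathbb{E}[\|V_k-V_\pi\|_\Lambda^2]\le\|V_0-V_\pi\|_\Lambda^2(1-(1-\beta^n)\epsilon)^k+\frac{8}{1-\beta^n}\left(\frac{(1-\beta^n)^2}{(1-\beta)^2}+2\beta^{2n}\|V_\pi\|_\Lambda^2\right)\epsilon.$$
   Context: Finite MDP: finite state space $\mathcal S$, finite action space $\mathcal A$, transition matrices $P_a$, reward $\mathcal R:\mathcal S\times\mathcal A\to[0,1]$, discount $\beta\in(0,1)$. Fix a policy $\pi$ with value function $V_\pi(s)=\mathbb{E}_\pi[\sum_{k\ge0}\beta^k\mathcal R(S_k,A_k)\mid S_0=s]$, and assume the Markov chain $\{S_k\}$ under $\pi$ has a unique stationary distribution $\lambda$ with $\lambda(s)>0$ for all $s$. Let $\Lambda=\mathrm{diag}(\lambda)$ and $\|V\|_\Lambda=(V^\top\Lambda V)^{1/2}$. Fix $n\ge1$. TD$(n)$: from deterministic $V_0$, at each iteration $k$ and for each $s$, a fresh trajectory $S_0^s=s,A_0^s,\dots,S_n^s$ is sampled under $\pi$ (independently of the past given the current iterate), and $V_{k+1}(s)=V_k(s)+\epsilon_k(\sum_{t=0}^{n-1}\beta^t\mathcal R(S_t^s,A_t^s)+\beta^nV_k(S_n^s)-V_k(s))$. *)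

theory Defs
  imports "HOL-Probability.Probability"
begin

definition chain_step :: "('s \<Rightarrow> 'a pmf) \<Rightarrow> ('s \<Rightarrow> 'a \<Rightarrow> 's pmf) \<Rightarrow> 's \<Rightarrow> 's pmf" where
  "chain_step pol P s = bind_pmf (pol s) (\<lambda>a. P s a)"

definition stationary :: "('s \<Rightarrow> 'a pmf) \<Rightarrow> ('s \<Rightarrow> 'a \<Rightarrow> 's pmf) \<Rightarrow> 's pmf \<Rightarrow> bool" where
  "stationary pol P mu \<longleftrightarrow> bind_pmf mu (chain_step pol P) = mu"

text \<open>Distribution of a length-m trajectory S_0 = s, A_0, S_1, ..., A_(m-1), S_m under pi:
  the list of state-action pairs (S_t, A_t), t < m, together with the final state S_m.\<close>
fun traj :: "('s \<Rightarrow> 'a pmf) \<Rightarrow> ('s \<Rightarrow> 'a \<Rightarrow> 's pmf) \<Rightarrow> 's \<Rightarrow> nat \<Rightarrow> ((('s \<times> 'a) list) \<times> 's) pmf" where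
  "traj pol P s 0 = return_pmf ([], s)"
| "traj pol P s (Suc m) =
     bind_pmf (pol s) (\<lambda>a. bind_pmf (P s a) (\<lambda>s'.
       map_pmf (\<lambda>(xs, sm). ((s, a) # xs, sm)) (traj pol P s' m)))"

definition disc_return :: "('s \<Rightarrow> 'a \<Rightarrow> real) \<Rightarrow> real \<Rightarrow> ('s \<times> 'a) list \<Rightarrow> real" where
  "disc_return R \<beta> xs = (\<Sum>t<length xs. \<beta> ^ t * R (fst (xs ! t)) (snd (xs ! t)))"

definition value_fun :: "('s \<Rightarrow> 'a pmf) \<Rightarrow> ('s \<Rightarrow> 'a \<Rightarrow> 's pmf) \<Rightarrow> ('s \<Rightarrow> 'a \<Rightarrow> real) \<Rightarrow> real \<Rightarrow> 's \<Rightarrow> real" where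
  "value_fun pol P R \<beta> s =
     lim (\<lambda>m. measure_pmf.expectation (traj pol P s m) (\<lambda>(xs, sm). disc_return R \<beta> xs))"

definition lnorm_sq :: "'s::finite pmf \<Rightarrow> ('s \<Rightarrow> real) \<Rightarrow> real" where
  "lnorm_sq lam V = (\<Sum>s\<in>UNIV. pmf lam s * (V s)\<^sup>2)"

text \<open>One TD(n) iteration with step size eps: for every state s an independent fresh
  n-step trajectory from s is drawn, and V(s) is updated with the n-step target.\<close>
definition td_step :: "('s::finite \<Rightarrow> 'a pmf) \<Rightarrow> ('s \<Rightarrow> 'a \<Rightarrow> 's pmf) \<Rightarrow> ('s \<Rightarrow> 'a \<Rightarrow> real)
    \<Rightarrow> real \<Rightarrow> nat \<Rightarrow> real \<Rightarrow> ('s \<Rightarrow> real) \<Rightarrow> ('s \<Rightarrow> real) pmf" where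
  "td_step pol P R \<beta> n eps V =
     map_pmf (\<lambda>tr s. V s + eps * (disc_return R \<beta> (fst (tr s)) + \<beta> ^ n * V (snd (tr s)) - V s))
       (Pi_pmf UNIV undefined (\<lambda>s. traj pol P s n))"

fun td_iter :: "('s::finite \<Rightarrow> 'a pmf) \<Rightarrow> ('s \<Rightarrow> 'a \<Rightarrow> 's pmf) \<Rightarrow> ('s \<Rightarrow> 'a \<Rightarrow> real)
    \<Rightarrow> real \<Rightarrow> nat \<Rightarrow> real \<Rightarrow> ('s \<Rightarrow> real) \<Rightarrow> nat \<Rightarrow> ('s \<Rightarrow> real) pmf" where
  "td_iter pol P R \<beta> n eps V0 0 = return_pmf V0"
| "td_iter pol P R \<beta> n eps V0 (Suc k) =
     bind_pmf (td_iter pol P R \<beta> n eps V0 k) (td_step pol P R \<beta> n eps)"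

end

theory Submission
  imports Defs
begin

text \<open>Fix a state \<open>s\<close>. The n-step target \<open>G + \<beta>\<^sup>n V(S\<^sub>n)\<close> of TD(n) is an unbiased
  sample of the n-step Bellman equation \<open>V\<^sub>\<pi>(s) = E[G + \<beta>\<^sup>n V\<^sub>\<pi>(S\<^sub>n)]\<close>, so the new
  error at \<open>s\<close> is a deterministic drift \<open>(1-\<epsilon>)(V - V\<^sub>\<pi>)(s) + \<epsilon>\<beta>\<^sup>n E[(V - V\<^sub>\<pi>)(S\<^sub>n)]\<close>
  plus centred noise whose second moment is \<open>O(\<epsilon>\<^sup>2)\<close>. Averaging over the stationary
  distribution \<open>\<lambda>\<close>, the law of \<open>S\<^sub>n\<close> is again \<open>\<lambda>\<close>, which makes the drift a contraction
  in \<open>\<parallel>\<cdot>\<parallel>\<^sub>\<Lambda>\<close>: for small \<open>\<epsilon>\<close> one step gives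
  \<open>E\<parallel>V\<^sub>k\<^sub>+\<^sub>1 - V\<^sub>\<pi>\<parallel>\<^sup>2 \<le> (1 - (1-\<beta>\<^sup>n)\<epsilon>) E\<parallel>V\<^sub>k - V\<^sub>\<pi>\<parallel>\<^sup>2 + \<epsilon>\<^sup>2 D\<close> with an explicit constant \<open>D\<close>, and unrolling this affine
  recursion yields the geometric term plus the \<open>\<epsilon>D/(1-\<beta>\<^sup>n)\<close> floor.\<close>

abbreviation E :: "'b pmf \<Rightarrow> ('b \<Rightarrow> real) \<Rightarrow> real" where
  "E M f \<equiv> measure_pmf.expectation M f"

subsection \<open>Expectations over finitely supported distributions\<close>

lemma integral_bind_pmf_finite:
  fixes f :: "'b \<Rightarrow> real"
  assumes M: "finite (set_pmf M)" and N: "\<And>x. x \<in> set_pmf M \<Longrightarrow> finite (set_pmf (N x))"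
  shows "E (bind_pmf M N) f = E M (\<lambda>x. E (N x) f)"
proof -
  define S where "S = (\<Union>x\<in>set_pmf M. set_pmf (N x))"
  have S: "finite S" using M N by (auto simp: S_def)
  have "E (bind_pmf M N) f = (\<Sum>y\<in>S. f y * pmf (bind_pmf M N) y)"
    by (rule integral_measure_pmf_real) (use S in \<open>auto simp: S_def\<close>)
  also have "\<dots> = (\<Sum>y\<in>S. f y * (\<Sum>x\<in>set_pmf M. pmf (N x) y * pmf M x))"
    unfolding pmf_bind
    by (intro sum.cong refl arg_cong2[where f="(*)"] integral_measure_pmf_real M) auto
  also have "\<dots> = (\<Sum>x\<in>set_pmf M. (\<Sum>y\<in>S. f y * pmf (N x) y) * pmf M x)"
    unfolding sum_distrib_left sum_distrib_right
    by (subst sum.swap) (simp add: mult_ac)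
  also have "\<dots> = (\<Sum>x\<in>set_pmf M. E (N x) f * pmf M x)"
    by (intro sum.cong refl arg_cong2[where f="(*)"] integral_measure_pmf_real[symmetric] S)
       (auto simp: S_def)
  also have "\<dots> = E M (\<lambda>x. E (N x) f)"
    by (rule integral_measure_pmf_real[symmetric]) (use M in auto)
  finally show ?thesis .
qed

lemma expectation_finite_type:
  fixes M :: "'b::finite pmf"
  shows "E M f = (\<Sum>x\<in>UNIV. pmf M x * f x)"
  by (subst integral_measure_pmf_real[where A=UNIV]) (auto simp: mult_ac)

lemma lnorm_sq_eq_expectation: "lnorm_sq lam V = E lam (\<lambda>s. (V s)\<^sup>2)"
  unfolding lnorm_sq_def expectation_finite_type ..

lemma lnorm_sq_nonneg: "0 \<le> lnorm_sq lam V"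
  unfolding lnorm_sq_def by (intro sum_nonneg mult_nonneg_nonneg) auto

lemma expectation_affine_finite:
  assumes "finite (set_pmf M)"
  shows "E M (\<lambda>x. c + b * g x) = c + b * E M g"
  using assms by (simp add: integrable_measure_pmf_finite)

lemma expectation_mono_finite:
  assumes "finite (set_pmf M)" and "\<And>x. x \<in> set_pmf M \<Longrightarrow> f x \<le> g x"
  shows "E M f \<le> E M g"
  using assms by (intro integral_mono_AE AE_pmfI) (auto simp: integrable_measure_pmf_finite)

lemma expectation_bind_pmf_affine_le:
  assumes "finite (set_pmf M)" and "\<And>x. x \<in> set_pmf M \<Longrightarrow> finite (set_pmf (N x))"
    and "\<And>x. x \<in> set_pmf M \<Longrightarrow> E (N x) f \<le> \<rho> * f x + d"
  shows "E (bind_pmf M N) f \<le> \<rho> * E M f + d"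
proof -
  have "E (bind_pmf M N) f = E M (\<lambda>x. E (N x) f)"
    by (rule integral_bind_pmf_finite) (use assms in auto)
  also have "\<dots> \<le> E M (\<lambda>x. d + \<rho> * f x)"
    by (rule expectation_mono_finite) (use assms in \<open>auto simp: add.commute\<close>)
  also have "\<dots> = \<rho> * E M f + d"
    using expectation_affine_finite[OF assms(1)] by simp
  finally show ?thesis .
qed

lemma
  assumes "finite (set_pmf M)"
  shows expectation_centered_sq_le: "E M (\<lambda>x. (f x - E M f)\<^sup>2) \<le> E M (\<lambda>x. (f x)\<^sup>2)"
    and square_expectation_le: "(E M f)\<^sup>2 \<le> E M (\<lambda>x. (f x)\<^sup>2)"
  using measure_pmf.variance_eq[of M f] measure_pmf.variance_positive[of M f]
  by (simp_all add: integrable_measure_pmf_finite[OF assms])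

lemma expectation_sq_add_centered:
  assumes "finite (set_pmf M)" and "E M Z = 0"
  shows "E M (\<lambda>x. (c + Z x)\<^sup>2) = c\<^sup>2 + E M (\<lambda>x. (Z x)\<^sup>2)"
proof -
  have "E M (\<lambda>x. (c + Z x)\<^sup>2) = E M (\<lambda>x. c\<^sup>2 + 2 * c * Z x + (Z x)\<^sup>2)"
    by (simp add: power2_sum ac_simps)
  then show ?thesis
    using assms by (simp add: integrable_measure_pmf_finite)
qed

subsection \<open>Mean square error of one stochastic approximation update\<close>

lemma power2_add_le: "((p::real) + q)\<^sup>2 \<le> 2 * p\<^sup>2 + 2 * q\<^sup>2"
  using zero_le_power2[of "p - q"] by (simp add: power2_eq_square algebra_simps)

lemma power2_convex_combination_le:
  fixes \<epsilon> b d m :: real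
  assumes "0 \<le> \<epsilon>" "\<epsilon> \<le> 1" "0 \<le> b"
  shows "((1-\<epsilon>) * d + \<epsilon> * b * m)\<^sup>2
    \<le> ((1-\<epsilon>)\<^sup>2 + (1-\<epsilon>)*\<epsilon>*b) * d\<^sup>2 + ((1-\<epsilon>)*\<epsilon>*b + \<epsilon>\<^sup>2*b\<^sup>2) * m\<^sup>2"
proof -
  have "2 * d * m \<le> d\<^sup>2 + m\<^sup>2"
    using zero_le_power2[of "d - m"] by (simp add: power2_eq_square algebra_simps)
  then have "(1-\<epsilon>)*\<epsilon>*b * (2 * d * m) \<le> (1-\<epsilon>)*\<epsilon>*b * (d\<^sup>2 + m\<^sup>2)"
    using assms by (intro mult_left_mono) auto
  then show ?thesis by (simp add: power2_eq_square algebra_simps)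
qed

text \<open>In the application \<open>G\<close>, \<open>U\<close>, \<open>W\<close> are the discounted reward, \<open>V(S\<^sub>n)\<close> and
  \<open>V\<^sub>\<pi>(S\<^sub>n)\<close> along an n-step trajectory, and \<open>b = \<beta>\<^sup>n\<close>.\<close>

lemma expectation_update_sq_error_le:
  fixes M :: "'x pmf" and G U W :: "'x \<Rightarrow> real"
  assumes M: "finite (set_pmf M)" and \<epsilon>: "0 \<le> \<epsilon>" "\<epsilon> \<le> 1" and b: "0 \<le> b"
    and fixpoint: "vs = E M (\<lambda>x. G x + b * W x)"
  shows "E M (\<lambda>x. (v + \<epsilon> * (G x + b * U x - v) - vs)\<^sup>2)
    \<le> ((1-\<epsilon>)\<^sup>2 + (1-\<epsilon>)*\<epsilon>*b) * (v - vs)\<^sup>2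
      + ((1-\<epsilon>)*\<epsilon>*b + 3*\<epsilon>\<^sup>2*b\<^sup>2) * E M (\<lambda>x. (U x - W x)\<^sup>2)
      + 4*\<epsilon>\<^sup>2 * E M (\<lambda>x. (G x)\<^sup>2) + 4*\<epsilon>\<^sup>2*b\<^sup>2 * E M (\<lambda>x. (W x)\<^sup>2)"
proof -
  note int = integrable_measure_pmf_finite[OF M]
  define m where "m = E M (\<lambda>x. U x - W x)"
  define p where "p x = \<epsilon> * (G x + b * W x - vs)" for x
  define q where "q x = \<epsilon> * b * ((U x - W x) - m)" for x
  have decomp: "v + \<epsilon> * (G x + b * U x - v) - vs = ((1-\<epsilon>) * (v-vs) + \<epsilon>*b*m) + (p x + q x)" for x
    by (simp add: p_def q_def algebra_simps)
  have centred: "E M (\<lambda>x. p x + q x) = 0"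
    unfolding p_def q_def m_def fixpoint by (simp add: int algebra_simps)
  have p2: "E M (\<lambda>x. (p x)\<^sup>2) \<le> \<epsilon>\<^sup>2 * (2 * E M (\<lambda>x. (G x)\<^sup>2) + 2 * b\<^sup>2 * E M (\<lambda>x. (W x)\<^sup>2))"
  proof -
    have "E M (\<lambda>x. (G x + b * W x - vs)\<^sup>2) \<le> E M (\<lambda>x. (G x + b * W x)\<^sup>2)"
      unfolding fixpoint by (rule expectation_centered_sq_le[OF M])
    also have "\<dots> \<le> E M (\<lambda>x. 2 * (G x)\<^sup>2 + 2 * (b * W x)\<^sup>2)"
      by (intro expectation_mono_finite M power2_add_le)
    also have "\<dots> = 2 * E M (\<lambda>x. (G x)\<^sup>2) + 2 * b\<^sup>2 * E M (\<lambda>x. (W x)\<^sup>2)"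
      by (simp add: int power_mult_distrib)
    finally show ?thesis
      unfolding p_def power_mult_distrib by (simp add: mult_left_mono)
  qed
  have q2: "E M (\<lambda>x. (q x)\<^sup>2) \<le> \<epsilon>\<^sup>2 * b\<^sup>2 * E M (\<lambda>x. (U x - W x)\<^sup>2)"
    using expectation_centered_sq_le[OF M, of "\<lambda>x. U x - W x"]
    unfolding q_def m_def power_mult_distrib by (simp add: mult_left_mono)
  have split: "E M (\<lambda>x. (v + \<epsilon> * (G x + b * U x - v) - vs)\<^sup>2)
      = ((1-\<epsilon>) * (v-vs) + \<epsilon>*b*m)\<^sup>2 + E M (\<lambda>x. (p x + q x)\<^sup>2)"
    unfolding decomp by (rule expectation_sq_add_centered[OF M centred])
  have noise: "E M (\<lambda>x. (p x + q x)\<^sup>2) \<le> 2 * E M (\<lambda>x. (p x)\<^sup>2) + 2 * E M (\<lambda>x. (q x)\<^sup>2)"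
    using expectation_mono_finite[OF M power2_add_le] by (simp add: int)
  have drift: "((1-\<epsilon>) * (v-vs) + \<epsilon>*b*m)\<^sup>2
      \<le> ((1-\<epsilon>)\<^sup>2 + (1-\<epsilon>)*\<epsilon>*b) * (v-vs)\<^sup>2 + ((1-\<epsilon>)*\<epsilon>*b + \<epsilon>\<^sup>2*b\<^sup>2) * m\<^sup>2"
    by (rule power2_convex_combination_le[OF \<epsilon> b])
  have "((1-\<epsilon>)*\<epsilon>*b + \<epsilon>\<^sup>2*b\<^sup>2) * m\<^sup>2 \<le> ((1-\<epsilon>)*\<epsilon>*b + \<epsilon>\<^sup>2*b\<^sup>2) * E M (\<lambda>x. (U x - W x)\<^sup>2)"
    unfolding m_def using \<epsilon> b by (intro mult_left_mono square_expectation_le[OF M]) auto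
  then show ?thesis
    using split noise drift p2 q2 by (simp add: algebra_simps)
qed

subsection \<open>Trajectories and the truncated value function\<close>

lemma length_traj: "x \<in> set_pmf (traj pol P s m) \<Longrightarrow> length (fst x) = m"
  by (induction m arbitrary: s x) auto

lemma finite_set_pmf_traj:
  fixes pol :: "'s::finite \<Rightarrow> 'a::finite pmf"
  shows "finite (set_pmf (traj pol P s m))"
proof (rule finite_subset)
  show "set_pmf (traj pol P s m) \<subseteq> {xs. set xs \<subseteq> UNIV \<and> length xs = m} \<times> UNIV"
    using length_traj by fastforce
  show "finite ({xs. set xs \<subseteq> (UNIV::('s \<times> 'a) set) \<and> length xs = m} \<times> (UNIV :: 's set))"
    by (intro finite_cartesian_product finite_lists_length_eq) auto
qed

lemma expectation_traj_Suc:
  fixes pol :: "'s::finite \<Rightarrow> 'a::finite pmf"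
  shows "E (traj pol P s (Suc m)) f =
    E (pol s) (\<lambda>a. E (P s a) (\<lambda>s'. E (traj pol P s' m) (\<lambda>x. f ((s, a) # fst x, snd x))))"
  by (simp add: integral_bind_pmf_finite finite_set_pmf_traj case_prod_unfold)

lemma disc_return_Cons: "disc_return R \<beta> ((s, a) # xs) = R s a + \<beta> * disc_return R \<beta> xs"
  unfolding disc_return_def length_Cons sum.lessThan_Suc_shift
  by (simp add: sum_distrib_left mult_ac)

lemma disc_return_bounds:
  assumes R: "\<And>s a. 0 \<le> R s a \<and> R s a \<le> 1" and \<beta>: "0 \<le> \<beta>" "\<beta> < 1"
  shows "0 \<le> disc_return R \<beta> xs \<and> disc_return R \<beta> xs \<le> (1 - \<beta> ^ length xs) / (1 - \<beta>)"
proof -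
  have "disc_return R \<beta> xs \<le> (\<Sum>t<length xs. \<beta> ^ t)"
    unfolding disc_return_def using R \<beta> by (intro sum_mono) (auto intro: mult_left_le)
  also have "\<dots> = (1 - \<beta> ^ length xs) / (1 - \<beta>)"
    using \<beta> by (simp add: sum_gp_strict)
  finally show ?thesis
    unfolding disc_return_def using R \<beta> by (auto intro!: sum_nonneg)
qed

definition value_trunc :: "('s \<Rightarrow> 'a pmf) \<Rightarrow> ('s \<Rightarrow> 'a \<Rightarrow> 's pmf) \<Rightarrow> ('s \<Rightarrow> 'a \<Rightarrow> real)
    \<Rightarrow> real \<Rightarrow> nat \<Rightarrow> 's \<Rightarrow> real" where
  "value_trunc pol P R \<beta> m s = E (traj pol P s m) (\<lambda>(xs, sm). disc_return R \<beta> xs)"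

lemma value_trunc_0 [simp]: "value_trunc pol P R \<beta> 0 s = 0"
  by (simp add: value_trunc_def disc_return_def)

lemma value_trunc_Suc:
  fixes pol :: "'s::finite \<Rightarrow> 'a::finite pmf"
  shows "value_trunc pol P R \<beta> (Suc m) s =
    E (pol s) (\<lambda>a. E (P s a) (\<lambda>s'. R s a + \<beta> * value_trunc pol P R \<beta> m s'))"
  unfolding value_trunc_def expectation_traj_Suc
  by (simp add: disc_return_Cons case_prod_unfold expectation_affine_finite finite_set_pmf_traj)

lemma value_trunc_add:
  fixes pol :: "'s::finite \<Rightarrow> 'a::finite pmf"
  shows "value_trunc pol P R \<beta> (n + m) s =
    E (traj pol P s n) (\<lambda>x. disc_return R \<beta> (fst x) + \<beta> ^ n * value_trunc pol P R \<beta> m (snd x))"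
proof (induction n arbitrary: s)
  case 0
  then show ?case by (simp add: disc_return_def)
next
  case (Suc n)
  have step: "E (traj pol P s' n) (\<lambda>x. disc_return R \<beta> ((s, a) # fst x)
        + \<beta> ^ Suc n * value_trunc pol P R \<beta> m (snd x))
      = R s a + \<beta> * E (traj pol P s' n)
        (\<lambda>x. disc_return R \<beta> (fst x) + \<beta> ^ n * value_trunc pol P R \<beta> m (snd x))" for a s'
    by (subst expectation_affine_finite[symmetric])
       (simp_all add: disc_return_Cons finite_set_pmf_traj algebra_simps)
  show ?case
    unfolding add_Suc value_trunc_Suc expectation_traj_Suc Suc fst_conv snd_conv step ..
qed

lemma value_trunc_mono:
  fixes pol :: "'s::finite \<Rightarrow> 'a::finite pmf"
  assumes R: "\<And>s a. 0 \<le> R s a" and \<beta>: "0 \<le> \<beta>"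
  shows "value_trunc pol P R \<beta> m s \<le> value_trunc pol P R \<beta> (Suc m) s"
proof (induction m arbitrary: s)
  case 0
  then show ?case by (simp add: value_trunc_Suc R integral_nonneg)
next
  case (Suc m)
  show ?case
    by (subst (1 2) value_trunc_Suc)
       (intro expectation_mono_finite finite add_left_mono mult_left_mono Suc \<beta>)
qed

lemma value_trunc_bounded:
  fixes pol :: "'s::finite \<Rightarrow> 'a::finite pmf"
  assumes R: "\<And>s a. 0 \<le> R s a \<and> R s a \<le> 1" and \<beta>: "0 \<le> \<beta>" "\<beta> < 1"
  shows "value_trunc pol P R \<beta> m s \<le> 1 / (1 - \<beta>)"
proof -
  have "value_trunc pol P R \<beta> m s = E (traj pol P s m) (\<lambda>x. disc_return R \<beta> (fst x))"
    by (simp add: value_trunc_def case_prod_unfold)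
  also have "\<dots> \<le> E (traj pol P s m) (\<lambda>x. 1 / (1 - \<beta>))"
  proof (rule expectation_mono_finite[OF finite_set_pmf_traj])
    fix x :: "('s \<times> 'a) list \<times> 's"
    have "disc_return R \<beta> (fst x) \<le> (1 - \<beta> ^ length (fst x)) / (1 - \<beta>)"
      using disc_return_bounds[of R \<beta> "fst x"] R \<beta> by blast
    also have "\<dots> \<le> 1 / (1 - \<beta>)"
      using \<beta> by (intro divide_right_mono) auto
    finally show "disc_return R \<beta> (fst x) \<le> 1 / (1 - \<beta>)" .
  qed
  finally show ?thesis by simp
qed

lemma value_trunc_tendsto_value_fun:
  fixes pol :: "'s::finite \<Rightarrow> 'a::finite pmf"
  assumes R: "\<And>s a. 0 \<le> R s a \<and> R s a \<le> 1" and \<beta>: "0 \<le> \<beta>" "\<beta> < 1"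
  shows "(\<lambda>m. value_trunc pol P R \<beta> m s) \<longlonglongrightarrow> value_fun pol P R \<beta> s"
proof -
  have "incseq (\<lambda>m. value_trunc pol P R \<beta> m s)"
    by (rule incseq_SucI, rule value_trunc_mono) (use R \<beta> in auto)
  moreover have "\<forall>m. value_trunc pol P R \<beta> m s \<le> 1 / (1 - \<beta>)"
    using value_trunc_bounded[of R \<beta>] R \<beta> by blast
  ultimately have "convergent (\<lambda>m. value_trunc pol P R \<beta> m s)"
    unfolding convergent_def by (blast intro: incseq_convergent)
  then show ?thesis
    unfolding value_fun_def value_trunc_def[symmetric] by (simp add: convergent_LIMSEQ_iff)
qed

lemma value_fun_bellman:
  fixes pol :: "'s::finite \<Rightarrow> 'a::finite pmf"
  assumes R: "\<And>s a. 0 \<le> R s a \<and> R s a \<le> 1" and \<beta>: "0 \<le> \<beta>" "\<beta> < 1"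
  shows "value_fun pol P R \<beta> s =
    E (traj pol P s n) (\<lambda>x. disc_return R \<beta> (fst x) + \<beta> ^ n * value_fun pol P R \<beta> (snd x))"
proof -
  let ?M = "traj pol P s n"
  have sum: "E ?M f = (\<Sum>x\<in>set_pmf ?M. f x * pmf ?M x)" for f
    by (rule integral_measure_pmf_real) (auto simp: finite_set_pmf_traj)
  have "(\<lambda>m. value_trunc pol P R \<beta> (m + n) s) \<longlonglongrightarrow> value_fun pol P R \<beta> s"
    using LIMSEQ_ignore_initial_segment[OF value_trunc_tendsto_value_fun[of R \<beta>, OF R \<beta>]] .
  moreover have "(\<lambda>m. value_trunc pol P R \<beta> (m + n) s) \<longlonglongrightarrow>
      E ?M (\<lambda>x. disc_return R \<beta> (fst x) + \<beta> ^ n * value_fun pol P R \<beta> (snd x))"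
    unfolding add.commute[of _ n] value_trunc_add sum
    by (intro tendsto_intros value_trunc_tendsto_value_fun[of R \<beta>, OF R \<beta>])
  ultimately show ?thesis by (rule LIMSEQ_unique)
qed

subsection \<open>Stationarity\<close>

lemma map_pmf_snd_traj_Suc:
  "map_pmf snd (traj pol P s (Suc m)) =
    bind_pmf (chain_step pol P s) (\<lambda>s'. map_pmf snd (traj pol P s' m))"
  by (simp add: chain_step_def bind_assoc_pmf map_bind_pmf map_pmf_comp case_prod_unfold)

lemma stationary_bind_traj_final:
  assumes "stationary pol P lam"
  shows "bind_pmf lam (\<lambda>s. map_pmf snd (traj pol P s m)) = lam"
proof (induction m)
  case 0
  then show ?case by (simp add: bind_return_pmf')
next
  case (Suc m)
  have "bind_pmf lam (\<lambda>s. map_pmf snd (traj pol P s (Suc m)))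
      = bind_pmf (bind_pmf lam (chain_step pol P)) (\<lambda>s'. map_pmf snd (traj pol P s' m))"
    unfolding map_pmf_snd_traj_Suc bind_assoc_pmf ..
  also have "\<dots> = lam"
    using assms Suc by (simp add: stationary_def)
  finally show ?case .
qed

lemma expectation_traj_final_stationary:
  fixes pol :: "'s::finite \<Rightarrow> 'a::finite pmf"
  assumes "stationary pol P lam"
  shows "E lam (\<lambda>s. E (traj pol P s n) (\<lambda>x. h (snd x))) = E lam h"
proof -
  have "E lam (\<lambda>s. E (traj pol P s n) (\<lambda>x. h (snd x)))
      = E (bind_pmf lam (\<lambda>s. map_pmf snd (traj pol P s n))) h"
    by (subst integral_bind_pmf_finite) auto
  then show ?thesis
    using stationary_bind_traj_final[OF assms] by simp
qed


subsection \<open>One TD step\<close>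

lemma finite_set_pmf_Pi_traj:
  fixes pol :: "'s::finite \<Rightarrow> 'a::finite pmf"
  shows "finite (set_pmf (Pi_pmf UNIV d (\<lambda>s. traj pol P s n)))"
  by (rule finite_subset[OF set_Pi_pmf_subset'[of UNIV]]) (auto simp: finite_set_pmf_traj)

lemma finite_set_pmf_td_step:
  fixes pol :: "'s::finite \<Rightarrow> 'a::finite pmf"
  shows "finite (set_pmf (td_step pol P R \<beta> n eps V))"
  unfolding td_step_def by (simp add: finite_set_pmf_Pi_traj)

lemma finite_set_pmf_td_iter:
  fixes pol :: "'s::finite \<Rightarrow> 'a::finite pmf"
  shows "finite (set_pmf (td_iter pol P R \<beta> n eps V0 k))"
  by (induction k) (auto simp: finite_set_pmf_td_step)

lemma expectation_Pi_pmf_component: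
  fixes pol :: "'s::finite \<Rightarrow> 'a::finite pmf"
  shows "E (Pi_pmf UNIV d (\<lambda>s. traj pol P s n)) (\<lambda>tr. g (tr s)) = E (traj pol P s n) g"
proof -
  have "E (traj pol P s n) g = E (map_pmf (\<lambda>f. f s) (Pi_pmf UNIV d (\<lambda>s. traj pol P s n))) g"
    by (subst Pi_pmf_component) auto
  then show ?thesis by simp
qed

lemma expectation_td_step_lnorm_sq:
  fixes pol :: "'s::finite \<Rightarrow> 'a::finite pmf"
  shows "E (td_step pol P R \<beta> n eps V) (\<lambda>W. lnorm_sq lam (\<lambda>s. W s - Vs s))
    = E lam (\<lambda>s. E (traj pol P s n)
        (\<lambda>x. (V s + eps * (disc_return R \<beta> (fst x) + \<beta> ^ n * V (snd x) - V s) - Vs s)\<^sup>2))"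
proof -
  define h where "h s x = (V s + eps * (disc_return R \<beta> (fst x) + \<beta> ^ n * V (snd x) - V s) - Vs s)\<^sup>2"
    for s x
  let ?Pi = "Pi_pmf UNIV undefined (\<lambda>s. traj pol P s n)"
  have "E (td_step pol P R \<beta> n eps V) (\<lambda>W. lnorm_sq lam (\<lambda>s. W s - Vs s))
      = E ?Pi (\<lambda>tr. \<Sum>s\<in>UNIV. pmf lam s * h s (tr s))"
    unfolding td_step_def lnorm_sq_def integral_map_pmf h_def ..
  also have "\<dots> = (\<Sum>s\<in>UNIV. pmf lam s * E ?Pi (\<lambda>tr. h s (tr s)))"
    by (subst Bochner_Integration.integral_sum)
       (simp_all add: integrable_measure_pmf_finite finite_set_pmf_Pi_traj)
  also have "\<dots> = (\<Sum>s\<in>UNIV. pmf lam s * E (traj pol P s n) (h s))"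
    by (simp only: expectation_Pi_pmf_component)
  finally show ?thesis
    unfolding expectation_finite_type[of lam] h_def .
qed

lemma expectation_sq_disc_return_le:
  fixes pol :: "'s::finite \<Rightarrow> 'a::finite pmf"
  assumes R: "\<And>s a. 0 \<le> R s a \<and> R s a \<le> 1" and \<beta>: "0 \<le> \<beta>" "\<beta> < 1"
  shows "E (traj pol P s n) (\<lambda>x. (disc_return R \<beta> (fst x))\<^sup>2) \<le> ((1 - \<beta> ^ n) / (1 - \<beta>))\<^sup>2"
proof -
  have "E (traj pol P s n) (\<lambda>x. (disc_return R \<beta> (fst x))\<^sup>2)
      \<le> E (traj pol P s n) (\<lambda>x. ((1 - \<beta> ^ n) / (1 - \<beta>))\<^sup>2)"
  proof (rule expectation_mono_finite[OF finite_set_pmf_traj])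
    fix x assume "x \<in> set_pmf (traj pol P s n)"
    then have "length (fst x) = n" by (rule length_traj)
    then show "(disc_return R \<beta> (fst x))\<^sup>2 \<le> ((1 - \<beta> ^ n) / (1 - \<beta>))\<^sup>2"
      using disc_return_bounds[of R \<beta> "fst x"] R \<beta> by (intro power_mono) auto
  qed
  then show ?thesis by simp
qed

lemma td_step_mean_square_error_le:
  fixes pol :: "'s::finite \<Rightarrow> 'a::finite pmf" and P :: "'s \<Rightarrow> 'a \<Rightarrow> 's pmf"
    and R :: "'s \<Rightarrow> 'a \<Rightarrow> real" and \<beta> :: real
  defines "Vs \<equiv> value_fun pol P R \<beta>"
  assumes R: "\<And>s a. 0 \<le> R s a \<and> R s a \<le> 1" and \<beta>: "0 \<le> \<beta>" "\<beta> < 1"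
    and stat: "stationary pol P lam" and eps: "0 \<le> eps" "eps \<le> 1"
  shows "E (td_step pol P R \<beta> n eps V) (\<lambda>W. lnorm_sq lam (\<lambda>s. W s - Vs s))
    \<le> ((1-eps)\<^sup>2 + 2*(1-eps)*eps*\<beta>^n + 3*eps\<^sup>2*(\<beta>^n)\<^sup>2) * lnorm_sq lam (\<lambda>s. V s - Vs s)
      + 4*eps\<^sup>2*((1-\<beta>^n)/(1-\<beta>))\<^sup>2 + 4*eps\<^sup>2*(\<beta>^n)\<^sup>2*lnorm_sq lam Vs"
proof -
  note int = integrable_measure_pmf_finite[OF finite[of "set_pmf lam"]]
  define C where "C = ((1-\<beta>^n)/(1-\<beta>))\<^sup>2"
  define A where "A = (1-eps)\<^sup>2 + (1-eps)*eps*\<beta>^n"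
  define B where "B = (1-eps)*eps*\<beta>^n + 3*eps\<^sup>2*(\<beta>^n)\<^sup>2"
  define err where "err s = (V s - Vs s)\<^sup>2" for s
  define Q where "Q s = E (traj pol P s n) (\<lambda>x. err (snd x))" for s
  define g where "g s = E (traj pol P s n) (\<lambda>x. (disc_return R \<beta> (fst x))\<^sup>2)" for s
  define w where "w s = E (traj pol P s n) (\<lambda>x. (Vs (snd x))\<^sup>2)" for s
  have each: "E (traj pol P s n)
        (\<lambda>x. (V s + eps * (disc_return R \<beta> (fst x) + \<beta> ^ n * V (snd x) - V s) - Vs s)\<^sup>2)
      \<le> A * err s + B * Q s + 4*eps\<^sup>2 * g s + 4*eps\<^sup>2*(\<beta>^n)\<^sup>2 * w s" for s
    unfolding A_def B_def err_def Q_def g_def w_def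
    using value_fun_bellman[of R \<beta> pol P s n] R \<beta> eps
    by (intro expectation_update_sq_error_le finite_set_pmf_traj) (simp_all add: Vs_def)
  have "E lam g \<le> E lam (\<lambda>s. C)"
    unfolding g_def C_def using R \<beta>
    by (intro expectation_mono_finite expectation_sq_disc_return_le) auto
  then have g: "E lam g \<le> C" by simp
  have "E (td_step pol P R \<beta> n eps V) (\<lambda>W. lnorm_sq lam (\<lambda>s. W s - Vs s))
      \<le> E lam (\<lambda>s. A * err s + B * Q s + 4*eps\<^sup>2 * g s + 4*eps\<^sup>2*(\<beta>^n)\<^sup>2 * w s)"
    unfolding expectation_td_step_lnorm_sq by (intro expectation_mono_finite each) auto
  also have "\<dots> = A * E lam err + B * E lam Q + 4*eps\<^sup>2 * E lam g + 4*eps\<^sup>2*(\<beta>^n)\<^sup>2 * E lam w"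
    by (simp add: int)
  also have "\<dots> \<le> (A + B) * lnorm_sq lam (\<lambda>s. V s - Vs s) + 4*eps\<^sup>2 * C
      + 4*eps\<^sup>2*(\<beta>^n)\<^sup>2 * lnorm_sq lam Vs"
  proof -
    have "E lam Q = lnorm_sq lam (\<lambda>s. V s - Vs s)"
      unfolding Q_def expectation_traj_final_stationary[OF stat]
      unfolding err_def lnorm_sq_eq_expectation ..
    moreover have "E lam err = lnorm_sq lam (\<lambda>s. V s - Vs s)"
      unfolding err_def lnorm_sq_eq_expectation ..
    moreover have "E lam w = lnorm_sq lam Vs"
      unfolding w_def lnorm_sq_eq_expectation by (rule expectation_traj_final_stationary[OF stat])
    ultimately show ?thesis
      using mult_left_mono[OF g, of "4*eps\<^sup>2"] by (simp add: algebra_simps)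
  qed
  finally show ?thesis
    unfolding A_def B_def C_def by (simp add: algebra_simps)
qed

lemma step_size_contraction_factor_le:
  fixes b eps :: real
  assumes b: "0 \<le> b" "b < 1" and eps: "0 < eps" "eps \<le> (1 - b) / (16 * (1 + b\<^sup>2))"
  shows "eps \<le> 1"
    and "(1-eps)\<^sup>2 + 2*(1-eps)*eps*b + 3*eps\<^sup>2*b\<^sup>2 \<le> 1 - (1-b)*eps"
proof -
  have small: "eps * (16 * (1 + b\<^sup>2)) \<le> 1 - b"
    using eps by (simp add: pos_le_divide_eq add_pos_nonneg)
  moreover have "eps * 16 \<le> eps * (16 * (1 + b\<^sup>2))"
    using eps by (intro mult_left_mono) auto
  ultimately show "eps \<le> 1"
    using b by linarith
  have "(1-b)\<^sup>2 + 2 * b\<^sup>2 \<le> 16 * (1 + b\<^sup>2)"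
    using b by (simp add: power2_eq_square algebra_simps mult_left_le)
  then have "eps * ((1-b)\<^sup>2 + 2 * b\<^sup>2) \<le> 1 - b"
    using small eps mult_left_mono[of _ _ eps] by (meson less_imp_le order_trans)
  then have "0 \<le> eps * ((1 - b) - eps * ((1-b)\<^sup>2 + 2 * b\<^sup>2))"
    using eps by simp
  then show "(1-eps)\<^sup>2 + 2*(1-eps)*eps*b + 3*eps\<^sup>2*b\<^sup>2 \<le> 1 - (1-b)*eps"
    by (simp add: power2_eq_square algebra_simps)
qed

lemma td_step_mean_square_contraction:
  fixes pol :: "'s::finite \<Rightarrow> 'a::finite pmf" and P :: "'s \<Rightarrow> 'a \<Rightarrow> 's pmf"
    and R :: "'s \<Rightarrow> 'a \<Rightarrow> real" and \<beta> :: real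
  defines "Vs \<equiv> value_fun pol P R \<beta>"
  assumes R: "\<And>s a. 0 \<le> R s a \<and> R s a \<le> 1" and \<beta>: "0 < \<beta>" "\<beta> < 1" and n: "n \<ge> 1"
    and stat: "stationary pol P lam"
    and eps: "0 < eps" "eps \<le> (1 - \<beta> ^ n) / (16 * (1 + (\<beta> ^ n)\<^sup>2))"
  shows "E (td_step pol P R \<beta> n eps V) (\<lambda>W. lnorm_sq lam (\<lambda>s. W s - Vs s))
    \<le> (1 - (1 - \<beta> ^ n) * eps) * lnorm_sq lam (\<lambda>s. V s - Vs s)
      + eps\<^sup>2 * (4 * ((1 - \<beta> ^ n) / (1 - \<beta>))\<^sup>2 + 4 * ((\<beta> ^ n)\<^sup>2 * lnorm_sq lam Vs))"
proof -
  have b: "0 \<le> \<beta> ^ n" "\<beta> ^ n < 1"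
    using \<beta> n by (simp_all add: power_less_one_iff)
  note step_size = step_size_contraction_factor_le[OF b eps]
  have "E (td_step pol P R \<beta> n eps V) (\<lambda>W. lnorm_sq lam (\<lambda>s. W s - Vs s))
    \<le> ((1-eps)\<^sup>2 + 2*(1-eps)*eps*\<beta>^n + 3*eps\<^sup>2*(\<beta>^n)\<^sup>2) * lnorm_sq lam (\<lambda>s. V s - Vs s)
      + 4*eps\<^sup>2*((1-\<beta>^n)/(1-\<beta>))\<^sup>2 + 4*eps\<^sup>2*(\<beta>^n)\<^sup>2*lnorm_sq lam Vs"
    unfolding Vs_def using R \<beta> stat eps step_size(1)
    by (intro td_step_mean_square_error_le) auto
  also have "\<dots> \<le> (1 - (1 - \<beta> ^ n) * eps) * lnorm_sq lam (\<lambda>s. V s - Vs s)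
      + 4*eps\<^sup>2*((1-\<beta>^n)/(1-\<beta>))\<^sup>2 + 4*eps\<^sup>2*(\<beta>^n)\<^sup>2*lnorm_sq lam Vs"
    using step_size(2) by (intro add_right_mono mult_right_mono lnorm_sq_nonneg)
  finally show ?thesis
    by (simp add: algebra_simps)
qed

subsection \<open>Iterating the contraction\<close>

lemma affine_recurrence_le:
  fixes x :: "nat \<Rightarrow> real"
  assumes step: "\<And>k. x (Suc k) \<le> \<rho> * x k + d" and "0 \<le> \<rho>" "\<rho> < 1" "0 \<le> d"
  shows "x k \<le> x 0 * \<rho> ^ k + d / (1 - \<rho>)"
proof (induction k)
  case 0
  then show ?case using assms by simp
next
  case (Suc k)
  have "x (Suc k) \<le> \<rho> * (x 0 * \<rho> ^ k + d / (1 - \<rho>)) + d"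
    using step[of k] Suc mult_left_mono[OF Suc \<open>0 \<le> \<rho>\<close>] by linarith
  also have "\<dots> = x 0 * \<rho> ^ Suc k + d / (1 - \<rho>)"
    using \<open>\<rho> < 1\<close> by (simp add: field_simps)
  finally show ?case .
qed

lemma noise_over_rate_le:
  fixes c eps X Y :: real
  assumes "0 < c" "0 < eps" "0 \<le> X" "0 \<le> Y"
  shows "eps\<^sup>2 * (4 * X + 4 * Y) / (1 - (1 - c * eps)) \<le> 8 / c * (X + 2 * Y) * eps"
proof -
  have "eps\<^sup>2 * (4 * X + 4 * Y) / (1 - (1 - c * eps)) = (4 * X + 4 * Y) / c * eps"
    using assms by (simp add: power2_eq_square)
  also have "\<dots> \<le> 8 * (X + 2 * Y) / c * eps"
    using assms by (intro mult_right_mono divide_right_mono) auto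
  finally show ?thesis by simp
qed

theorem theorem4:
  fixes pol :: "'s::finite \<Rightarrow> 'a::finite pmf"
    and P :: "'s \<Rightarrow> 'a \<Rightarrow> 's pmf"
    and R :: "'s \<Rightarrow> 'a \<Rightarrow> real"
    and \<beta> eps :: real and n :: nat
    and lam :: "'s pmf" and V0 :: "'s \<Rightarrow> real"
  assumes R_range: "\<And>s a. 0 \<le> R s a \<and> R s a \<le> 1"
    and beta: "0 < \<beta>" "\<beta> < 1"
    and n: "n \<ge> 1"
    and lam_stat: "stationary pol P lam"
    and lam_unique: "\<And>mu. stationary pol P mu \<Longrightarrow> mu = lam"
    and lam_pos: "\<And>s. pmf lam s > 0"
    and eps_pos: "0 < eps"
    and eps_le: "eps \<le> (1 - \<beta> ^ n) / (16 * (1 + \<beta> ^ (2 * n)))"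
  shows "\<forall>k. measure_pmf.expectation (td_iter pol P R \<beta> n eps V0 k)
                (\<lambda>V. lnorm_sq lam (\<lambda>s. V s - value_fun pol P R \<beta> s))
           \<le> lnorm_sq lam (\<lambda>s. V0 s - value_fun pol P R \<beta> s) * (1 - (1 - \<beta> ^ n) * eps) ^ k
             + 8 / (1 - \<beta> ^ n) * ((1 - \<beta> ^ n)\<^sup>2 / (1 - \<beta>)\<^sup>2
                 + 2 * \<beta> ^ (2 * n) * lnorm_sq lam (value_fun pol P R \<beta>)) * eps"
proof
  fix k
  let ?Vs = "value_fun pol P R \<beta>"
  let ?x = "\<lambda>k. E (td_iter pol P R \<beta> n eps V0 k) (\<lambda>V. lnorm_sq lam (\<lambda>s. V s - ?Vs s))"
  define c where "c = 1 - \<beta> ^ n"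
  define X where "X = (c / (1 - \<beta>))\<^sup>2"
  define Y where "Y = (\<beta> ^ n)\<^sup>2 * lnorm_sq lam ?Vs"
  note step_size = eps_le[unfolded power_even_eq]
  have c: "0 < c" "c \<le> 1"
    using beta n by (simp_all add: c_def power_less_one_iff)
  have "eps \<le> 1"
    using step_size_contraction_factor_le(1)[OF _ _ eps_pos step_size] beta n
    by (simp add: power_less_one_iff)
  then have "0 \<le> 1 - c * eps"
    using c eps_pos mult_mono[of c 1 eps 1] by simp
  moreover have "?x (Suc k) \<le> (1 - c * eps) * ?x k + eps\<^sup>2 * (4 * X + 4 * Y)" for k
    unfolding td_iter.simps c_def X_def Y_def
    using td_step_mean_square_contraction[OF R_range beta n lam_stat eps_pos step_size]
    by (intro expectation_bind_pmf_affine_le finite_set_pmf_td_iter finite_set_pmf_td_step)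
  ultimately have "?x k \<le> ?x 0 * (1 - c * eps) ^ k + eps\<^sup>2 * (4 * X + 4 * Y) / (1 - (1 - c * eps))"
    using c eps_pos by (intro affine_recurrence_le) (auto simp: X_def Y_def lnorm_sq_nonneg)
  also have "\<dots> \<le> ?x 0 * (1 - c * eps) ^ k + 8 / c * (X + 2 * Y) * eps"
    using c eps_pos by (intro add_left_mono noise_over_rate_le) (auto simp: X_def Y_def lnorm_sq_nonneg)
  finally show "?x k \<le> lnorm_sq lam (\<lambda>s. V0 s - ?Vs s) * (1 - (1 - \<beta> ^ n) * eps) ^ k
      + 8 / (1 - \<beta> ^ n) * ((1 - \<beta> ^ n)\<^sup>2 / (1 - \<beta>)\<^sup>2
        + 2 * \<beta> ^ (2 * n) * lnorm_sq lam ?Vs) * eps"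
    by (simp add: c_def X_def Y_def power_divide power_even_eq mult.assoc)
qed


end
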